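(* Let $R$ be a ring and let $\gamma_1,\gamma_2$ be bijections of $\mathbb{P}(R)$ each induced by a semilinear bijection of $R^2$. If $\gamma_1$ and $\gamma_2$ coincide on all points of some connected component $C$ of $\mathbb{P}(R)$, then $\gamma_1=\gamma_2$.
   Context: $R$ is an associative ring with unit element $1$; $R^*$ denotes its group of units and $\mathrm{GL}_2(R)$ the group of invertible $2\times2$ matrices over $R$. A pair $(a,b)\in R^2$ is admissible if it is the first row of some matrix in $\mathrm{GL}_2(R)$. The projective line $\mathbb{P}(R)$ is the set of all cyclic submodules $R(a,b)$ of the left $R$-module $R^2$ with $(a,b)$ admissible. Two points $R(a,b)$, $R(c,d)$ are distant iff $\begin{pmatrix}a&b\\c&d\end{pmatrix}\in\mathrm{GL}_2(R)$; connected components refer to the graph on $\mathbb{P}(R)$ whose edges are the pairs of distant points. A semilinear bijection of $R^2$ is a bijective additive map $f:R^2\to R^2$ for which there is a ring automorphism $\zeta$ of $R$ with $f(rv)=r^\zeta f(v)$ for all $r\in R$, $v\in R^2$; a bijection $\gamma$ of $\mathbb{P}(R)$ is induced by $f$ if $p^\gamma=f(p)$ for all $p\in\mathbb{P}(R)$. *)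

theory Defs
  imports Main
begin

text \<open>A 2x2 matrix ((a,b),(c,d)) is represented by its four entries.\<close>

definition smul2 :: "'a::ring_1 \<Rightarrow> 'a \<times> 'a \<Rightarrow> 'a \<times> 'a" where
  "smul2 r v = (r * fst v, r * snd v)"

definition inv2 :: "'a::ring_1 \<Rightarrow> 'a \<Rightarrow> 'a \<Rightarrow> 'a \<Rightarrow> bool" where
  "inv2 a b c d \<longleftrightarrow> (\<exists>a' b' c' d'.
      a*a' + b*c' = 1 \<and> a*b' + b*d' = 0 \<and> c*a' + d*c' = 0 \<and> c*b' + d*d' = 1 \<and>
      a'*a + b'*c = 1 \<and> a'*b + b'*d = 0 \<and> c'*a + d'*c = 0 \<and> c'*b + d'*d = 1)"

definition admissible :: "'a::ring_1 \<Rightarrow> 'a \<Rightarrow> bool" where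
  "admissible a b \<longleftrightarrow> (\<exists>c d. inv2 a b c d)"

definition cyc :: "'a::ring_1 \<Rightarrow> 'a \<Rightarrow> ('a \<times> 'a) set" where
  "cyc a b = {(r * a, r * b) | r. True}"

definition projline :: "('a::ring_1 \<times> 'a) set set" where
  "projline = {cyc a b | a b. admissible a b}"

definition distant :: "('a::ring_1 \<times> 'a) set \<Rightarrow> ('a \<times> 'a) set \<Rightarrow> bool" where
  "distant p q \<longleftrightarrow> (\<exists>a b c d. p = cyc a b \<and> q = cyc c d \<and> inv2 a b c d)"

definition distant_rel :: "(('a::ring_1 \<times> 'a) set \<times> ('a \<times> 'a) set) set" where
  "distant_rel = {(p, q). p \<in> projline \<and> q \<in> projline \<and> distant p q}"

definition component :: "('a::ring_1 \<times> 'a) set \<Rightarrow> ('a \<times> 'a) set set" where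
  "component p = {q \<in> projline. (p, q) \<in> distant_rel\<^sup>*}"

definition is_component :: "('a::ring_1 \<times> 'a) set set \<Rightarrow> bool" where
  "is_component C \<longleftrightarrow> (\<exists>p \<in> projline. C = component p)"

definition ring_automorphism :: "('a::ring_1 \<Rightarrow> 'a) \<Rightarrow> bool" where
  "ring_automorphism z \<longleftrightarrow> bij z \<and> (\<forall>x y. z (x + y) = z x + z y) \<and>
     (\<forall>x y. z (x * y) = z x * z y) \<and> z 1 = 1"

definition semilinear_bij :: "('a::ring_1 \<times> 'a \<Rightarrow> 'a \<times> 'a) \<Rightarrow> bool" where
  "semilinear_bij f \<longleftrightarrow> bij f \<and> (\<forall>v w. f (fst v + fst w, snd v + snd w) = (fst (f v) + fst (f w), snd (f v) + snd (f w))) \<and>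
     (\<exists>z. ring_automorphism z \<and> (\<forall>r v. f (smul2 r v) = smul2 (z r) (f v)))"

definition induced_by :: "(('a::ring_1 \<times> 'a) set \<Rightarrow> ('a \<times> 'a) set) \<Rightarrow> ('a \<times> 'a \<Rightarrow> 'a \<times> 'a) \<Rightarrow> bool" where
  "induced_by g f \<longleftrightarrow> (\<forall>p \<in> projline. g p = f ` p)"

end

theory Submission imports Defs begin

text \<open>The map h = f2\<inverse> \<circ> f1 is semilinear and fixes every point of C. Pick R(a,b) in C and a
matrix with rows (a,b), (c,d) in GL2(R); all points R(r(a,b) + (c,d)) are distant from R(a,b),
hence lie in C and are fixed by h. Writing h(a,b) = s(a,b) and h(c,d) = t(c,d), the fact that
h fixes R(r(a,b) + (c,d)) forces \<phi>(r) s = t r for the associated automorphism \<phi>; r = 1 gives t = s,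
and then h(v) = s v for every v. Since h maps R(a,b) onto itself, s has a right inverse, so h
fixes every cyclic submodule, i.e. f1 and f2 induce the same map on all of P(R).\<close>

definition semilinear_wrt :: "('a::ring_1 \<times> 'a \<Rightarrow> 'a \<times> 'a) \<Rightarrow> ('a \<Rightarrow> 'a) \<Rightarrow> bool" where
  "semilinear_wrt h \<phi> \<longleftrightarrow>
     (\<forall>x1 y1 x2 y2. h (x1 + x2, y1 + y2) =
        (fst (h (x1, y1)) + fst (h (x2, y2)), snd (h (x1, y1)) + snd (h (x2, y2)))) \<and>
     (\<forall>r x y. h (r * x, r * y) = (\<phi> r * fst (h (x, y)), \<phi> r * snd (h (x, y))))"

lemma inv2_swap: "inv2 a b c d \<Longrightarrow> inv2 c d a b"
  unfolding inv2_def by (metis add.commute)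

lemma inv2_add_row:
  fixes a b c d r :: "'a::ring_1"
  assumes "inv2 a b c d"
  shows "inv2 a b (r * a + c) (r * b + d)"
proof -
  obtain a' b' c' d' where h:
    "a*a' + b*c' = 1" "a*b' + b*d' = 0" "c*a' + d*c' = 0" "c*b' + d*d' = 1"
    "a'*a + b'*c = 1" "a'*b + b'*d = 0" "c'*a + d'*c = 0" "c'*b + d'*d = 1"
    using assms unfolding inv2_def by blast
  \<comment> \<open>the inverse of the row operation is the column operation subtracting r times column 2\<close>
  have "a*(a' - b'*r) + b*(c' - d'*r) = (a*a' + b*c') - (a*b' + b*d')*r"
    "(r*a + c)*(a' - b'*r) + (r*b + d)*(c' - d'*r)
       = r*(a*a' + b*c') + (c*a' + d*c') - r*(a*b' + b*d')*r - (c*b' + d*d')*r"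
    "(r*a + c)*b' + (r*b + d)*d' = r*(a*b' + b*d') + (c*b' + d*d')"
    "(a' - b'*r)*a + b'*(r*a + c) = a'*a + b'*c"
    "(a' - b'*r)*b + b'*(r*b + d) = a'*b + b'*d"
    "(c' - d'*r)*a + d'*(r*a + c) = c'*a + d'*c"
    "(c' - d'*r)*b + d'*(r*b + d) = c'*b + d'*d"
    by (simp_all add: algebra_simps)
  with h show ?thesis
    unfolding inv2_def by (intro exI[of _ "a' - b'*r"] exI[of _ b'] exI[of _ "c' - d'*r"] exI[of _ d']) simp
qed

lemma inv2_coeffs_unique:
  fixes a b c d :: "'a::ring_1"
  assumes "inv2 a b c d"
    and "\<alpha> * a + \<beta> * c = \<alpha>' * a + \<beta>' * c" and "\<alpha> * b + \<beta> * d = \<alpha>' * b + \<beta>' * d"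
  shows "\<alpha> = \<alpha>' \<and> \<beta> = \<beta>'"
proof -
  obtain a' b' c' d' where h:
    "a*a' + b*c' = 1" "a*b' + b*d' = 0" "c*a' + d*c' = 0" "c*b' + d*d' = 1"
    using assms(1) unfolding inv2_def by blast
  have col1: "(\<alpha>*a + \<beta>*c)*a' + (\<alpha>*b + \<beta>*d)*c' = \<alpha>*(a*a' + b*c') + \<beta>*(c*a' + d*c')" for \<alpha> \<beta>
    by (simp add: algebra_simps)
  have col2: "(\<alpha>*a + \<beta>*c)*b' + (\<alpha>*b + \<beta>*d)*d' = \<alpha>*(a*b' + b*d') + \<beta>*(c*b' + d*d')" for \<alpha> \<beta>
    by (simp add: algebra_simps)
  show ?thesis
    using col1[of \<alpha> \<beta>] col1[of \<alpha>' \<beta>'] col2[of \<alpha> \<beta>] col2[of \<alpha>' \<beta>'] assms(2,3) h by simp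
qed

lemma inv2_decompose:
  fixes a b c d :: "'a::ring_1"
  assumes "inv2 a b c d"
  obtains \<alpha> \<beta> where "x = \<alpha> * a + \<beta> * c" and "y = \<alpha> * b + \<beta> * d"
proof -
  obtain a' b' c' d' where h:
    "a'*a + b'*c = 1" "a'*b + b'*d = 0" "c'*a + d'*c = 0" "c'*b + d'*d = 1"
    using assms unfolding inv2_def by blast
  have "(x*a' + y*c')*a + (x*b' + y*d')*c = x*(a'*a + b'*c) + y*(c'*a + d'*c)"
    "(x*a' + y*c')*b + (x*b' + y*d')*d = x*(a'*b + b'*d) + y*(c'*b + d'*d)"
    by (simp_all add: algebra_simps)
  with h show ?thesis
    using that[of "x*a' + y*c'" "x*b' + y*d'"] by simp
qed

lemma cyc_generator: "(a, b) \<in> cyc a b"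
  unfolding cyc_def by (metis (mono_tags, lifting) mem_Collect_eq mult_1)

lemma image_subset_cyc_generator:
  assumes "h ` cyc a b \<subseteq> cyc a b"
  obtains s where "h (a, b) = (s * a, s * b)"
  using assms cyc_generator[of a b] unfolding cyc_def by blast

lemma semilinear_fixing_frame_is_scalar:
  fixes a b c d :: "'a::ring_1"
  assumes h: "semilinear_wrt h \<phi>" and "\<phi> 1 = 1" and iv: "inv2 a b c d"
    and fix_ab: "h ` cyc a b = cyc a b"
    and fix_row: "\<And>r. h ` cyc (r * a + c) (r * b + d) \<subseteq> cyc (r * a + c) (r * b + d)"
  obtains s k where "\<And>x y. h (x, y) = (s * x, s * y)" and "s * k = 1"
proof -
  have add: "h (x1 + x2, y1 + y2) = (fst (h (x1, y1)) + fst (h (x2, y2)), snd (h (x1, y1)) + snd (h (x2, y2)))"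
    and mul: "h (r * x, r * y) = (\<phi> r * fst (h (x, y)), \<phi> r * snd (h (x, y)))" for x1 y1 x2 y2 r x y
    using h unfolding semilinear_wrt_def by blast+
  obtain s where hs: "h (a, b) = (s * a, s * b)"
    using image_subset_cyc_generator fix_ab by blast
  obtain t where ht: "h (c, d) = (t * c, t * d)"
    using image_subset_cyc_generator[OF fix_row[of 0]] by auto
  have h_comb: "h (\<alpha> * a + \<beta> * c, \<alpha> * b + \<beta> * d) = (\<phi> \<alpha> * s * a + \<phi> \<beta> * t * c, \<phi> \<alpha> * s * b + \<phi> \<beta> * t * d)"
    for \<alpha> \<beta>
    using add[of "\<alpha> * a" "\<beta> * c" "\<alpha> * b" "\<beta> * d"] mul[of \<alpha> a b] mul[of \<beta> c d] hs ht
    by (simp add: mult.assoc)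
  have twist: "\<phi> r * s = t * r" for r
  proof -
    obtain w where "h (r * a + c, r * b + d) = (w * (r * a + c), w * (r * b + d))"
      using image_subset_cyc_generator[OF fix_row[of r]] by blast
    with h_comb[of r 1] \<open>\<phi> 1 = 1\<close>
    have "(\<phi> r * s) * a + t * c = (w * r) * a + w * c" "(\<phi> r * s) * b + t * d = (w * r) * b + w * d"
      by (auto simp: algebra_simps)
    from inv2_coeffs_unique[OF iv this] show ?thesis by simp
  qed
  then have "t = s" using \<open>\<phi> 1 = 1\<close> by (metis mult_1 mult_1_right)
  have scalar: "h (x, y) = (s * x, s * y)" for x y
  proof -
    obtain \<alpha> \<beta> where xy: "x = \<alpha> * a + \<beta> * c" "y = \<alpha> * b + \<beta> * d"
      using inv2_decompose[OF iv] by blast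
    show ?thesis
      unfolding xy h_comb using twist \<open>t = s\<close> by (simp add: algebra_simps)
  qed
  obtain k where "(a, b) = h (k * a, k * b)"
    using fix_ab cyc_generator[of a b] unfolding cyc_def by blast
  then have "(s * k) * a + 0 * c = 1 * a + 0 * c" "(s * k) * b + 0 * d = 1 * b + 0 * d"
    by (auto simp: scalar mult.assoc)
  then have "s * k = 1" using inv2_coeffs_unique[OF iv] by blast
  with scalar that show ?thesis by blast
qed

lemma right_invertible_scalar_fixes_cyc:
  fixes s k :: "'a::ring_1"
  assumes scalar: "\<And>x y. h (x, y) = (s * x, s * y)" and "s * k = 1"
  shows "h ` cyc x y = cyc x y"
proof
  show "h ` cyc x y \<subseteq> cyc x y"
    unfolding cyc_def using scalar by (auto simp: mult.assoc[symmetric])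
  show "cyc x y \<subseteq> h ` cyc x y"
  proof
    fix v assume "v \<in> cyc x y"
    then obtain r where v: "v = (r * x, r * y)" unfolding cyc_def by auto
    have "v = h ((k * r) * x, (k * r) * y)"
      using v scalar \<open>s * k = 1\<close> by (simp add: mult.assoc[symmetric])
    moreover have "((k * r) * x, (k * r) * y) \<in> cyc x y" unfolding cyc_def by auto
    ultimately show "v \<in> h ` cyc x y" by blast
  qed
qed

lemma semilinear_bij_inv_comp:
  assumes "semilinear_bij f1" and "semilinear_bij f2"
  obtains \<phi> where "semilinear_wrt (\<lambda>v. inv f2 (f1 v)) \<phi>" and "\<phi> 1 = 1"
proof -
  obtain z1 where z1: "ring_automorphism z1" "\<And>r v. f1 (smul2 r v) = smul2 (z1 r) (f1 v)"
    and add1: "\<And>v w. f1 (fst v + fst w, snd v + snd w) = (fst (f1 v) + fst (f1 w), snd (f1 v) + snd (f1 w))"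
    using assms(1) unfolding semilinear_bij_def by blast
  obtain z2 where z2: "ring_automorphism z2" "\<And>r v. f2 (smul2 r v) = smul2 (z2 r) (f2 v)"
    and add2: "\<And>v w. f2 (fst v + fst w, snd v + snd w) = (fst (f2 v) + fst (f2 w), snd (f2 v) + snd (f2 w))"
    and "bij f2"
    using assms(2) unfolding semilinear_bij_def by blast
  have "bij z2" using z2(1) unfolding ring_automorphism_def by blast
  define h where "h = (\<lambda>v. inv f2 (f1 v))"
  have f2h: "f2 (h v) = f1 v" for v
    unfolding h_def using \<open>bij f2\<close> by (simp add: bij_is_surj surj_f_inv_f)
  have z2_inv: "z2 (inv z2 (z1 r)) = z1 r" for r
    using \<open>bij z2\<close> by (simp add: bij_is_surj surj_f_inv_f)
  have f2_eq: "f2 v = f2 w \<longleftrightarrow> v = w" for v w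
    using \<open>bij f2\<close> by (simp add: bij_is_inj inj_eq)
  have "f2 (h (x1 + x2, y1 + y2)) = f2 (fst (h (x1, y1)) + fst (h (x2, y2)), snd (h (x1, y1)) + snd (h (x2, y2)))"
    for x1 y1 x2 y2
    using add1[of "(x1, y1)" "(x2, y2)"] add2[of "h (x1, y1)" "h (x2, y2)"] by (simp add: f2h)
  moreover have "f2 (h (r * x, r * y)) = f2 (smul2 (inv z2 (z1 r)) (h (x, y)))" for r x y
    using z1(2)[of r "(x, y)"] z2(2) by (simp add: f2h z2_inv smul2_def)
  ultimately have "semilinear_wrt h (\<lambda>r. inv z2 (z1 r))"
    unfolding semilinear_wrt_def f2_eq by (simp add: smul2_def)
  moreover have "inv z2 (z1 1) = 1"
    using z1(1) z2(1) \<open>bij z2\<close> unfolding ring_automorphism_def by (metis bij_is_inj inv_f_f)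
  ultimately show ?thesis
    using that unfolding h_def by blast
qed

lemma cyc_in_own_component: "cyc a b \<in> projline \<Longrightarrow> cyc a b \<in> component (cyc a b)"
  unfolding component_def by simp

lemma cyc_add_row_in_component:
  assumes "inv2 a b c d"
  shows "cyc (r * a + c) (r * b + d) \<in> component (cyc a b)"
proof -
  have iv: "inv2 a b (r * a + c) (r * b + d)" using inv2_add_row[OF assms] .
  then have "cyc a b \<in> projline" "cyc (r * a + c) (r * b + d) \<in> projline"
    unfolding projline_def admissible_def using inv2_swap by blast+
  moreover have "distant (cyc a b) (cyc (r * a + c) (r * b + d))"
    unfolding distant_def using iv by blast
  ultimately show ?thesis unfolding component_def distant_rel_def by auto
qed

theorem mainTheorem5:
  fixes g1 g2 :: "('a::ring_1 \<times> 'a) set \<Rightarrow> ('a \<times> 'a) set"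
    and f1 f2 :: "'a \<times> 'a \<Rightarrow> 'a \<times> 'a"
    and C :: "('a \<times> 'a) set set"
  assumes "bij_betw g1 projline projline" and "bij_betw g2 projline projline"
    and "semilinear_bij f1" and "induced_by g1 f1"
    and "semilinear_bij f2" and "induced_by g2 f2"
    and "is_component C"
    and "\<forall>p \<in> C. g1 p = g2 p"
  shows "\<forall>p \<in> projline. g1 p = g2 p"
proof -
  define h where "h = (\<lambda>v. inv f2 (f1 v))"
  have "bij f2" using assms(5) unfolding semilinear_bij_def by blast
  then have f1_via_h: "f1 ` p = f2 ` h ` p" for p
    unfolding h_def by (simp add: image_image bij_is_surj surj_f_inv_f)
  have induced_eq: "g1 p = g2 p \<longleftrightarrow> h ` p = p" if "p \<in> projline" for p
    using assms(4,6) that \<open>bij f2\<close> unfolding induced_by_def f1_via_h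
    by (simp add: bij_is_inj inj_image_eq_iff)
  obtain a b c d where C: "C = component (cyc a b)" and iv: "inv2 a b c d"
    using assms(7) unfolding is_component_def projline_def admissible_def by blast
  have fix_C: "h ` p = p" if "p \<in> C" for p
    using that assms(8) induced_eq C unfolding component_def by blast
  have "cyc a b \<in> projline"
    unfolding projline_def admissible_def using iv by blast
  then have fix_ab: "h ` cyc a b = cyc a b"
    using fix_C C cyc_in_own_component by blast
  have fix_row: "h ` cyc (r * a + c) (r * b + d) \<subseteq> cyc (r * a + c) (r * b + d)" for r
    using fix_C C cyc_add_row_in_component[OF iv] by blast
  obtain \<phi> where "semilinear_wrt h \<phi>" "\<phi> 1 = 1"
    using semilinear_bij_inv_comp[OF assms(3,5)] unfolding h_def by blast
  then obtain s k where "\<And>x y. h (x, y) = (s * x, s * y)" "s * k = 1"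
    using semilinear_fixing_frame_is_scalar[OF _ _ iv fix_ab fix_row] by blast
  then have "h ` cyc x y = cyc x y" for x y
    by (rule right_invertible_scalar_fixes_cyc)
  then have "h ` p = p" if "p \<in> projline" for p
    using that unfolding projline_def by blast
  with induced_eq show ?thesis by blast
qed

end
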